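(* Let $T$ be a sequence of length $n$ over $\mathbb{A}$ and $I\subseteq\mathbb{A}$ an itemset with $|I|\ge 2$. Let $0<i<n$ and let $r_i^1(I),\dots,r_i^{|I|}(I)$ be the ordering of $I$ described in the context. If $T[i]=r_i^{|I|}(I)$, then for every integer $k\ge 0$ $$H_i[k]=H_{i-1}[k]+\mathbf{1}\big[k=\lambda(r_i^{|I|}(I),i-1)\big]-\mathbf{1}\big[k=\lambda(r_i^{|I|-1}(I),i-1)\big].$$ If $T[i]\neq r_i^{|I|}(I)$ (in particular if $T[i]\notin I$), then $H_i[k]=H_{i-1}[k]$ for all $k\ge 0$.
   Context: A sequence $T=(T[0],\dots,T[n-1])$ has entries in $\mathbb{A}$. For $e\in\mathbb{A}$ and $-1\le i\le n-1$, let $\lambda(e,i)=i-\max\{j\le i:T[j]=e\}$, where the maximum of the empty set is taken to be $-1$ (so $\lambda(e,i)=i+1$ if $e$ does not occur among $T[0],\dots,T[i]$). For $0<i<n$, the elements of $I$ are listed as $r_i^1(I),\dots,r_i^{|I|}(I)$ so that $\lambda(r_i^1(I),i-1)\le\lambda(r_i^2(I),i-1)\le\dots\le\lambda(r_i^{|I|}(I),i-1)$ (ties broken arbitrarily but fixed); thus $r_i^{|I|}(I)$ is an item of $I$ last seen furthest in the past before index $i$. For nonempty $A\subseteq I$ and an index $j$ with $T[j]\in A$, let $p_A(j)=\max\{j'<j:T[j']\in A\}$ (or $-1$ if no such $j'$); the $A$-gap closed at $j$ is $T[p_A(j)+1..j-1]$, of length $j-1-p_A(j)\ge 0$. For $-1\le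 i\le n-1$ and integers $k\ge0$, the partial gap histogram is $$H_i[k]=\sum_{\emptyset\ne A\subseteq I}(-1)^{|A|+1}\,\#\{\,j\le i:\ T[j]\in A,\ j-1-p_A(j)=k\,\}.$$ $\mathbf{1}[\cdot]$ denotes the indicator (1 if the condition holds, 0 otherwise). *)

theory Defs
  imports Main
begin

text \<open>lambda(e,i) = i - max{j \<le> i. T[j] = e}, with max of empty set = -1 (so value i+1).
  Indices are natural numbers; only i \<ge> 0 is needed.\<close>
definition lam :: "'a list \<Rightarrow> 'a \<Rightarrow> nat \<Rightarrow> nat" where
  "lam T e i = (if \<exists>j\<le>i. T ! j = e then i - Max {j. j \<le> i \<and> T ! j = e} else i + 1)"

definition prevA :: "'a list \<Rightarrow> 'a set \<Rightarrow> nat \<Rightarrow> int" where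
  "prevA T A j = (if \<exists>j'<j. T ! j' \<in> A then int (Max {j'. j' < j \<and> T ! j' \<in> A}) else -1)"

definition gapH :: "'a list \<Rightarrow> 'a set \<Rightarrow> nat \<Rightarrow> nat \<Rightarrow> int" where
  "gapH T I i k = (\<Sum>A \<in> {A. A \<subseteq> I \<and> A \<noteq> {}}.
      (-1) ^ (card A + 1) *
      int (card {j. j \<le> i \<and> T ! j \<in> A \<and> int j - 1 - prevA T A j = int k}))"

end

theory Submission
  imports Defs
begin

text \<open>Only index \<open>i\<close> itself can close new gaps: it closes an \<open>A\<close>-gap iff \<open>T[i] \<in> A\<close>, and that
  gap has length \<open>min {\<lambda>(a, i - 1) | a \<in> A}\<close>. So \<open>H\<^sub>i[k] - H\<^sub>i\<^sub>-\<^sub>1[k]\<close> is the alternating sum of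
  \<open>[min\<^sub>A \<lambda> = k]\<close> over the sets \<open>A \<subseteq> I\<close> containing \<open>e = T[i]\<close>. For a fixed \<open>f \<noteq> e\<close>, pair each
  such \<open>A\<close> with \<open>A \<union> {f}\<close>: the two terms cancel whenever adding \<open>f\<close> does not lower the minimum.
  If \<open>e\<close> is not the least recently seen item, take \<open>f\<close> with \<open>\<lambda>(e) \<le> \<lambda>(f)\<close> and everything
  cancels; if it is, take \<open>f\<close> the second least recently seen, and only \<open>{e}, {e, f}\<close> survive,
  contributing \<open>[k = \<lambda>(e)] - [k = \<lambda>(f)]\<close>.\<close>

lemma sum_Pow_insert:
  assumes "finite X" "x \<notin> X"
  shows "sum g (Pow (insert x X)) = sum g (Pow X) + (\<Sum>C\<in>Pow X. g (insert x C))"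
proof -
  have inj: "inj_on (insert x) (Pow X)"
    using assms(2) unfolding inj_on_def by (metis PowD insert_absorb insert_ident subsetD)
  have "sum g (Pow (insert x X)) = sum g (Pow X \<union> insert x ` Pow X)"
    by (simp add: Pow_insert)
  also have "\<dots> = sum g (Pow X) + sum g (insert x ` Pow X)"
    by (rule sum.union_disjoint) (use assms in auto)
  also have "sum g (insert x ` Pow X) = (\<Sum>C\<in>Pow X. g (insert x C))"
    using sum.reindex[OF inj] by simp
  finally show ?thesis .
qed

lemma sum_Pow_pair_insert:
  fixes g :: "'a set \<Rightarrow> 'b::comm_monoid_add"
  assumes "finite I" "e \<in> I" "f \<in> I" "f \<noteq> e"
    and "\<And>A. e \<notin> A \<Longrightarrow> g A = 0"
  shows "(\<Sum>A\<in>Pow I. g A) = (\<Sum>C\<in>Pow (I - {e, f}). g (insert e C) + g (insert e (insert f C)))"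
proof -
  define R where "R = I - {e, f}"
  have I: "I = insert e (insert f R)" and "finite R" "e \<notin> R" "f \<notin> R"
    using assms unfolding R_def by auto
  have "sum g (Pow (insert f R)) = 0"
    by (rule sum.neutral) (use \<open>f \<noteq> e\<close> \<open>e \<notin> R\<close> assms(5) in auto)
  then show ?thesis
    using \<open>finite R\<close> \<open>e \<notin> R\<close> \<open>f \<notin> R\<close> \<open>f \<noteq> e\<close>
    by (simp add: I sum_Pow_insert sum.distrib R_def[symmetric])
qed

text \<open>\<open>Min {}\<close> is unspecified, but the empty set is excluded by the condition \<open>e \<in> A\<close>.\<close>

definition incl_excl_Min :: "('a \<Rightarrow> nat) \<Rightarrow> 'a set \<Rightarrow> 'a \<Rightarrow> nat \<Rightarrow> int" where
  "incl_excl_Min lf I e k =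
    (\<Sum>A\<in>Pow I. (-1) ^ (card A + 1) * (if e \<in> A \<and> Min (lf ` A) = k then 1 else 0))"

lemma alternating_Min_pair_cancel:
  fixes lf :: "'a \<Rightarrow> nat"
  assumes "finite C" "e \<notin> C" "f \<notin> C" "Min (lf ` insert e C) \<le> lf f" "f \<noteq> e"
  shows "(-1::int) ^ (card (insert e C) + 1) * (if Min (lf ` insert e C) = k then 1 else 0)
       + (-1) ^ (card (insert e (insert f C)) + 1)
           * (if Min (lf ` insert e (insert f C)) = k then 1 else 0) = 0"
proof -
  have "lf ` insert e (insert f C) = insert (lf f) (lf ` insert e C)"
    by auto
  then have "Min (lf ` insert e (insert f C)) = min (lf f) (Min (lf ` insert e C))"
    using \<open>finite C\<close> by (simp add: Min_insert)
  also have "\<dots> = Min (lf ` insert e C)"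
    using assms(4) by simp
  finally show ?thesis
    using assms by simp
qed

lemma incl_excl_Min_eq_0:
  assumes "finite I" "e \<in> I" "f \<in> I" "f \<noteq> e" "lf e \<le> lf f"
  shows "incl_excl_Min lf I e k = 0"
proof -
  let ?g = "\<lambda>A. (-1::int) ^ (card A + 1) * (if e \<in> A \<and> Min (lf ` A) = k then 1 else 0)"
  have "(\<Sum>A\<in>Pow I. ?g A) = (\<Sum>C\<in>Pow (I - {e, f}). ?g (insert e C) + ?g (insert e (insert f C)))"
    by (rule sum_Pow_pair_insert) (use assms in auto)
  also have "\<dots> = 0"
  proof (rule sum.neutral, rule ballI)
    fix C assume "C \<in> Pow (I - {e, f})"
    then have "finite C" "e \<notin> C" "f \<notin> C"
      using assms(1) finite_subset by auto
    have "Min (lf ` insert e C) \<le> lf e"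
      using \<open>finite C\<close> by (intro Min_le) auto
    then have "Min (lf ` insert e C) \<le> lf f"
      using assms(5) by linarith
    from alternating_Min_pair_cancel[OF \<open>finite C\<close> \<open>e \<notin> C\<close> \<open>f \<notin> C\<close> this assms(4)]
    show "?g (insert e C) + ?g (insert e (insert f C)) = 0"
      by simp
  qed
  finally show ?thesis
    unfolding incl_excl_Min_def .
qed

lemma incl_excl_Min_eq_0_if_not_mem:
  assumes "e \<notin> I"
  shows "incl_excl_Min lf I e k = 0"
  unfolding incl_excl_Min_def by (rule sum.neutral) (use assms in auto)

lemma incl_excl_Min_last:
  assumes "finite I" "e \<in> I" "f \<in> I" "f \<noteq> e" "lf f \<le> lf e"
    and "\<And>c. c \<in> I - {e} \<Longrightarrow> lf c \<le> lf f"
  shows "incl_excl_Min lf I e k = (if k = lf e then 1 else 0) - (if k = lf f then 1 else 0)"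
proof -
  let ?g = "\<lambda>A. (-1::int) ^ (card A + 1) * (if e \<in> A \<and> Min (lf ` A) = k then 1 else 0)"
  let ?h = "\<lambda>C. ?g (insert e C) + ?g (insert e (insert f C))"
  have "(\<Sum>A\<in>Pow I. ?g A) = (\<Sum>C\<in>Pow (I - {e, f}). ?h C)"
    by (rule sum_Pow_pair_insert) (use assms in auto)
  also have "\<dots> = ?h {} + (\<Sum>C\<in>Pow (I - {e, f}) - {{}}. ?h C)"
    by (rule sum.remove) (use assms(1) in auto)
  also have "(\<Sum>C\<in>Pow (I - {e, f}) - {{}}. ?h C) = 0"
  proof (rule sum.neutral, rule ballI)
    fix C assume C: "C \<in> Pow (I - {e, f}) - {{}}"
    then have "finite C" "e \<notin> C" "f \<notin> C"
      using assms(1) finite_subset by auto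
    obtain c where "c \<in> C"
      using C by auto
    then have "Min (lf ` insert e C) \<le> lf c"
      using \<open>finite C\<close> by (intro Min_le) auto
    also have "lf c \<le> lf f"
      using assms(6) C \<open>c \<in> C\<close> by auto
    finally have "Min (lf ` insert e C) \<le> lf f" .
    from alternating_Min_pair_cancel[OF \<open>finite C\<close> \<open>e \<notin> C\<close> \<open>f \<notin> C\<close> this assms(4)]
    show "?h C = 0"
      by simp
  qed
  also have "?h {} = (if k = lf e then 1 else 0) - (if k = lf f then 1 else 0)"
    using assms(4,5) by (auto simp: min_def)
  finally show ?thesis
    by (simp add: incl_excl_Min_def)
qed

lemma lam_ge_if_no_later_occurrence:
  assumes "\<forall>j. p < j \<and> j \<le> i \<longrightarrow> T ! j \<noteq> e"
  shows "i - p \<le> lam T e i"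
proof (cases "\<exists>j\<le>i. T ! j = e")
  case True
  have "Max {j. j \<le> i \<and> T ! j = e} \<le> p"
  proof (rule Max.boundedI)
    show "j \<le> p" if "j \<in> {j. j \<le> i \<and> T ! j = e}" for j
      using that assms leI by blast
  qed (use True in auto)
  then show ?thesis
    using True by (simp add: lam_def diff_le_mono2)
next
  case False
  then show ?thesis
    by (auto simp: lam_def)
qed

lemma lam_last_occurrence:
  assumes "p \<le> i" "T ! p = e" "\<forall>j. p < j \<and> j \<le> i \<longrightarrow> T ! j \<noteq> e"
  shows "lam T e i = i - p"
proof -
  have "Max {j. j \<le> i \<and> T ! j = e} = p"
  proof (rule Max_eqI)
    show "j \<le> p" if "j \<in> {j. j \<le> i \<and> T ! j = e}" for j
      using that assms(3) leI by blast
  qed (use assms(1,2) in auto)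
  then show ?thesis
    using assms(1,2) by (auto simp: lam_def)
qed

lemma gap_eq_Min_lam:
  assumes "finite A" "A \<noteq> {}"
  shows "int (Suc m) - 1 - prevA T A (Suc m) = int (Min ((\<lambda>a. lam T a m) ` A))"
proof (cases "\<exists>j<Suc m. T ! j \<in> A")
  case False
  then have "lam T a m = Suc m" if "a \<in> A" for a
    using that by (auto simp: lam_def)
  then have "(\<lambda>a. lam T a m) ` A = {Suc m}"
    using assms(2) by auto
  then show ?thesis
    using False by (simp add: prevA_def)
next
  case True
  define p where "p = Max {j. j < Suc m \<and> T ! j \<in> A}"
  have "p \<le> m" "T ! p \<in> A"
    using Max_in[of "{j. j < Suc m \<and> T ! j \<in> A}"] True unfolding p_def by auto
  have no_later: "\<forall>j. p < j \<and> j \<le> m \<longrightarrow> T ! j \<notin> A"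
  proof (intro allI impI notI)
    fix j assume "p < j \<and> j \<le> m" "T ! j \<in> A"
    then have "j \<le> p"
      unfolding p_def by (intro Max_ge) auto
    with \<open>p < j \<and> j \<le> m\<close> show False
      by simp
  qed
  have "Min ((\<lambda>a. lam T a m) ` A) = m - p"
  proof (rule Min_eqI)
    fix y assume "y \<in> (\<lambda>a. lam T a m) ` A"
    then obtain a where "a \<in> A" "y = lam T a m"
      by blast
    then have "\<forall>j. p < j \<and> j \<le> m \<longrightarrow> T ! j \<noteq> a"
      using no_later by auto
    then show "m - p \<le> y"
      unfolding \<open>y = lam T a m\<close> by (rule lam_ge_if_no_later_occurrence)
  next
    have "\<forall>j. p < j \<and> j \<le> m \<longrightarrow> T ! j \<noteq> T ! p"
      using no_later \<open>T ! p \<in> A\<close> by auto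
    then have "lam T (T ! p) m = m - p"
      using \<open>p \<le> m\<close> by (intro lam_last_occurrence) auto
    then show "m - p \<in> (\<lambda>a. lam T a m) ` A"
      using \<open>T ! p \<in> A\<close> by (metis image_eqI)
  qed (use assms(1) in simp)
  then show ?thesis
    using True \<open>p \<le> m\<close> by (simp add: prevA_def p_def[symmetric])
qed

lemma card_le_Suc_filter:
  "card {j. j \<le> Suc m \<and> P j} = card {j. j \<le> m \<and> P j} + (if P (Suc m) then 1 else 0)"
proof -
  have "{j. j \<le> Suc m \<and> P j}
      = (if P (Suc m) then insert (Suc m) {j. j \<le> m \<and> P j} else {j. j \<le> m \<and> P j})"
    by (auto simp: le_Suc_eq)
  then show ?thesis
    by simp
qed

lemma gapH_Suc:
  assumes "finite I"
  shows "gapH T I (Suc m) k = gapH T I m k + incl_excl_Min (\<lambda>a. lam T a m) I (T ! Suc m) k"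
proof -
  let ?N = "{A. A \<subseteq> I \<and> A \<noteq> {}}"
  let ?count = "\<lambda>i A. (-1::int) ^ (card A + 1)
    * int (card {j. j \<le> i \<and> T ! j \<in> A \<and> int j - 1 - prevA T A j = int k})"
  let ?new = "\<lambda>A. (-1::int) ^ (card A + 1)
    * (if T ! Suc m \<in> A \<and> Min ((\<lambda>a. lam T a m) ` A) = k then 1 else 0)"
  have "?count (Suc m) A = ?count m A + ?new A" if "A \<in> ?N" for A
  proof -
    have A: "finite A" "A \<noteq> {}"
      using that assms finite_subset by auto
    have "(int (Suc m) - 1 - prevA T A (Suc m) = int k) = (Min ((\<lambda>a. lam T a m) ` A) = k)"
      by (simp only: gap_eq_Min_lam[OF A] of_nat_eq_iff)
    then show ?thesis
      unfolding card_le_Suc_filter by (simp add: distrib_left)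
  qed
  then have "gapH T I (Suc m) k = gapH T I m k + sum ?new ?N"
    unfolding gapH_def sum.distrib[symmetric] by (rule sum.cong[OF refl])
  also have "sum ?new ?N = sum ?new (Pow I)"
    by (rule sum.mono_neutral_left) (use assms in auto)
  finally show ?thesis
    by (simp add: incl_excl_Min_def)
qed

lemma sorted_enumeration_last_two:
  fixes lf :: "'a \<Rightarrow> nat" and n :: nat
  assumes r: "bij_betw r {1..n} I" and "2 \<le> n"
    and sorted: "mono_on {1..n} (lf \<circ> r)"
  shows "r n \<in> I" "r (n - 1) \<in> I" "r (n - 1) \<noteq> r n"
    and "\<And>c. c \<in> I \<Longrightarrow> lf c \<le> lf (r n)"
    and "\<And>c. c \<in> I - {r n} \<Longrightarrow> lf c \<le> lf (r (n - 1))"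
proof -
  have "n \<in> {1..n}" "n - 1 \<in> {1..n}" "n - 1 \<noteq> n"
    using \<open>2 \<le> n\<close> by auto
  then show "r n \<in> I" "r (n - 1) \<in> I" "r (n - 1) \<noteq> r n"
    using bij_betw_apply[OF r] inj_on_eq_iff[OF bij_betw_imp_inj_on[OF r]] by simp_all
  have enum: "\<exists>j\<in>{1..n}. c = r j" if "c \<in> I" for c
    using that bij_betw_imp_surj_on[OF r] by blast
  show "lf c \<le> lf (r n)" if "c \<in> I" for c
    using enum[OF that] mono_onD[OF sorted] by fastforce
  show "lf c \<le> lf (r (n - 1))" if c: "c \<in> I - {r n}" for c
  proof -
    obtain j where j: "j \<in> {1..n}" "c = r j"
      using enum c by blast
    then have "j \<noteq> n"
      using c by blast
    then have "j \<le> n - 1"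
      using j by auto
    then show ?thesis
      using mono_onD[OF sorted, of j "n - 1"] j \<open>2 \<le> n\<close> by simp
  qed
qed

theorem mainTheorem3:
  fixes T :: "'a list" and I :: "'a set" and i :: nat and r :: "nat \<Rightarrow> 'a"
  assumes "2 \<le> card I"
    and "0 < i" and "i < length T"
    and "bij_betw r {1..card I} I"
    and "\<And>a b. 1 \<le> a \<Longrightarrow> a \<le> b \<Longrightarrow> b \<le> card I \<Longrightarrow>
           lam T (r a) (i - 1) \<le> lam T (r b) (i - 1)"
  shows "(T ! i = r (card I) \<longrightarrow>
            (\<forall>k::nat. gapH T I i k = gapH T I (i - 1) k
               + (if k = lam T (r (card I)) (i - 1) then 1 else 0)
               - (if k = lam T (r (card I - 1)) (i - 1) then 1 else 0)))
       \<and> (T ! i \<noteq> r (card I) \<longrightarrow> (\<forall>k::nat. gapH T I i k = gapH T I (i - 1) k))"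
proof -
  obtain m where i: "i = Suc m"
    using assms(2) gr0_implies_Suc by blast
  let ?lf = "\<lambda>a. lam T a m"
  have "finite I"
    using assms(1) card.infinite by fastforce
  have "mono_on {1..card I} (?lf \<circ> r)"
    using assms(5) unfolding i by (intro mono_onI) simp
  note last_two = sorted_enumeration_last_two[OF assms(4,1) this]
  have "incl_excl_Min ?lf I (T ! i) k
      = (if k = ?lf (r (card I)) then 1 else 0) - (if k = ?lf (r (card I - 1)) then 1 else 0)"
    if "T ! i = r (card I)" for k
    using incl_excl_Min_last[OF \<open>finite I\<close>] last_two that by simp
  moreover have "incl_excl_Min ?lf I (T ! i) k = 0" if "T ! i \<noteq> r (card I)" for k
  proof (cases "T ! i \<in> I")
    case True
    then show ?thesis
      using that last_two(1) last_two(4)[OF True]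
      by (intro incl_excl_Min_eq_0[OF \<open>finite I\<close> True]) auto
  qed (rule incl_excl_Min_eq_0_if_not_mem)
  ultimately show ?thesis
    unfolding i diff_Suc_1 gapH_Suc[OF \<open>finite I\<close>] by simp
qed

end
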